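(* Let $t_0<\beta\le+\infty$, $J=[t_0,\beta[$, let $D\subset\mathbb{R}^n$ be an open set, let $m\ge1$, and let $f\colon J\times D^m\to\mathbb{R}^n$ be continuous. Suppose there is a continuous function $k\colon J\to\mathbb{R}$ such that \[ \|F(t,z)-F(t,z')\|\le k(t)\,\|z-z'\|\qquad(t\in J,\ z,z'\in D^m), \] where $F(t,(z_1,\dots,z_m))=f(t,z_1,\dots,z_m)$. Let $g_1,\dots,g_m\colon J\to\mathbb{R}$ be continuous functions such that, for some real $\gamma\le t_0$, $\gamma\le g_j(t)\le t$ for all $t\in J$, $j=1,\dots,m$. Let $\theta,\widetilde\theta\colon[\gamma,t_0]\to D$ be continuous initial functions. Suppose $x,\widetilde x\colon[\gamma,\beta[\to D$ are solutions of the problems \[ x'(t)=f\big(t,x(g_1(t)),\dots,x(g_m(t))\big)\ (t\in J),\quad x(t)=\theta(t)\ (t\in[\gamma,t_0]), \] \[ \widetilde x'(t)=f\big(t,\widetilde x(g_1(t)),\dots,\widetilde x(g_m(t))\big)\ (t\in J),\quad \widetilde x(t)=\widetilde\theta(t)\ (t\in[\gamma,t_0]), \] respectively. Then for all $t\in[t_0,\beta[$, \[ \|x(t)-\widetilde x(t)\|\le\|\theta-\widetilde\theta\|\exp\Big(\int_{t_0}^t k(s)\,ds\Big), \] where $\|\theta-\widetilde\theta\|=\sup_{\gamma\le s\le t_0}\|\theta(s)-\widetilde\theta(s)\|$.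
   Context: A solution on $[\gamma,\beta[$ is a continuous function $[\gamma,\beta[\to D$, differentiable on $[t_0,\beta[$ (one-sided at $t_0$), satisfying the differential equation for all $t\in[t_0,\beta[$ and equal to the given initial function on $[\gamma,t_0]$. The norm $\|\cdot\|$ on $\mathbb{R}^n$ is a fixed norm, and on $D^m\subset(\mathbb{R}^n)^m$ the norm is $\|(z_1,\dots,z_m)\|=\max_{1\le j\le m}\|z_j\|$. *)

theory Defs
  imports "HOL-Analysis.Analysis"
begin

definition hoiv :: "real \<Rightarrow> ereal \<Rightarrow> real set" where
  "hoiv a b = {t. a \<le> t \<and> ereal t < b}"

text \<open>Max norm on D^m, with D^m represented as functions from a finite nonempty index type.\<close>
definition maxnorm :: "('m::finite \<Rightarrow> 'a::real_normed_vector) \<Rightarrow> real" where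
  "maxnorm z = Max (range (\<lambda>j. norm (z j)))"

definition is_delay_solution ::
  "(real \<Rightarrow> ('m::finite \<Rightarrow> 'a::real_normed_vector) \<Rightarrow> 'a) \<Rightarrow> ('m \<Rightarrow> real \<Rightarrow> real) \<Rightarrow> 'a set
   \<Rightarrow> real \<Rightarrow> real \<Rightarrow> ereal \<Rightarrow> (real \<Rightarrow> 'a) \<Rightarrow> (real \<Rightarrow> 'a) \<Rightarrow> bool" where
  "is_delay_solution f g D \<gamma> t0 \<beta> \<theta> x \<longleftrightarrow>
     x ` hoiv \<gamma> \<beta> \<subseteq> D \<and>
     continuous_on (hoiv \<gamma> \<beta>) x \<and>
     (\<forall>t\<in>hoiv t0 \<beta>. (x has_vector_derivative f t (\<lambda>j. x (g j t))) (at t within hoiv t0 \<beta>)) \<and>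
     (\<forall>t\<in>{\<gamma>..t0}. x t = \<theta> t)"

end

theory Submission
  imports Defs
begin

text \<open>Fix \<open>\<epsilon> > 0\<close> and compare the error \<open>e = x - x'\<close> with the barrier
  \<open>w(t) = (\<parallel>\<theta> - \<theta>'\<parallel> + \<epsilon>) exp (\<integral>\<^sub>t\<^sub>0\<^sup>t k)\<close>, which solves \<open>w' = k w\<close> and is nondecreasing.
  On \<open>[\<gamma>, t\<^sub>0]\<close> the error is below \<open>w\<close>. At a first time where \<open>\<parallel>e\<parallel>\<close> reached \<open>w\<close>, all
  delayed arguments \<open>g\<^sub>j(s) \<le> s\<close> still lie in the region where \<open>\<parallel>e\<parallel> < w\<close>, so the Lipschitz bound
  gives \<open>\<parallel>e'\<parallel> \<le> k w = w'\<close>, and the mean value inequality shows that \<open>\<parallel>e\<parallel>\<close> cannot have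
  caught up with \<open>w\<close>. Letting \<open>\<epsilon> \<rightarrow> 0\<close> gives the estimate.\<close>

lemma maxnorm_le_iff: "maxnorm z \<le> c \<longleftrightarrow> (\<forall>j. norm (z j) \<le> c)"
  unfolding maxnorm_def by (simp add: Max_le_iff)

lemma maxnorm_const [simp]: "maxnorm (\<lambda>j::'m::finite. v) = norm v"
  unfolding maxnorm_def by simp

lemma Icc_subset_hoiv: "ereal b < \<beta> \<Longrightarrow> {a..b} \<subseteq> hoiv a \<beta>"
  unfolding hoiv_def by (auto intro: order.strict_trans1[rotated])

lemma bdd_above_norm_image:
  fixes e :: "real \<Rightarrow> 'a::real_normed_vector"
  assumes "continuous_on {a..b} e"
  shows "bdd_above ((\<lambda>s. norm (e s)) ` {a..b})"
  by (intro bounded_imp_bdd_above compact_imp_bounded compact_continuous_image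
      continuous_intros assms compact_Icc)

lemma integral_le_integral_longer:
  fixes k :: "real \<Rightarrow> real"
  assumes "continuous_on {a..c} k" "\<And>s. s \<in> {a..c} \<Longrightarrow> 0 \<le> k s" "b \<le> b'" "b' \<le> c"
  shows "integral {a..b} k \<le> integral {a..b'} k"
proof (rule integral_subset_le)
  show "k integrable_on {a..b}" "k integrable_on {a..b'}"
    using assms by (auto intro!: integrable_continuous_interval elim: continuous_on_subset)
qed (use assms in auto)

lemma norm_less_barrier:
  fixes e :: "real \<Rightarrow> 'a::real_normed_vector" and w :: "real \<Rightarrow> real"
  assumes e_cont: "continuous_on {a..b} e" and w_cont: "continuous_on {a..b} w"
    and start: "norm (e a) < w a"
    and e_deriv: "\<And>t. a < t \<Longrightarrow> t < b \<Longrightarrow> (e has_vector_derivative e' t) (at t)"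
    and w_deriv: "\<And>t. a < t \<Longrightarrow> t < b \<Longrightarrow> (w has_real_derivative w' t) (at t)"
    and deriv_bound: "\<And>t. a < t \<Longrightarrow> t < b \<Longrightarrow> (\<forall>s\<in>{a..t}. norm (e s) < w s) \<Longrightarrow>
                        norm (e' t) \<le> w' t"
    and t: "t \<in> {a..b}"
  shows "norm (e t) < w t"
proof (rule ccontr)
  assume "\<not> norm (e t) < w t"
  define S where "S = {a..b} \<inter> (\<lambda>s. w s - norm (e s)) -` {..0}"
  have "t \<in> S" using t \<open>\<not> norm (e t) < w t\<close> unfolding S_def by auto
  moreover have "closed S"
    unfolding S_def by (intro continuous_closed_preimage continuous_intros e_cont w_cont)
  moreover have bdd: "bdd_below S" unfolding S_def by (rule bdd_belowI[of _ a]) auto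
  ultimately have "Inf S \<in> S" using closed_contains_Inf by blast
  define t1 where "t1 = Inf S"
  have t1: "a \<le> t1" "t1 \<le> b" "w t1 \<le> norm (e t1)"
    using \<open>Inf S \<in> S\<close> unfolding t1_def S_def by auto
  have below: "norm (e s) < w s" if "a \<le> s" "s < t1" for s
  proof (rule ccontr)
    assume "\<not> norm (e s) < w s"
    then have "s \<in> S" using that t1 unfolding S_def by auto
    then show False using cInf_lower[OF _ bdd] that unfolding t1_def by fastforce
  qed
  have "a < t1" using t1 start by (cases "a = t1") auto
  have "norm (e t1 - e a) \<le> w t1 - w a"
  proof (rule differentiable_bound_general[OF \<open>a < t1\<close>])
    show "continuous_on {a..t1} e" "continuous_on {a..t1} w"
      using e_cont w_cont t1 by (auto elim: continuous_on_subset)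
  next
    fix s assume s: "a < s" "s < t1"
    then show "(e has_vector_derivative e' s) (at s)" using e_deriv t1 by simp
    show "(w has_vector_derivative w' s) (at s)"
      using w_deriv s t1 by (simp add: has_real_derivative_iff_has_vector_derivative)
    show "norm (e' s) \<le> w' s" using deriv_bound s t1 below by auto
  qed
  then have "norm (e t1) \<le> norm (e a) + (w t1 - w a)"
    using norm_triangle_sub[of "e t1" "e a"] by simp
  then show False using start t1(3) by simp
qed

lemma delay_gronwall_strict:
  fixes e e' :: "real \<Rightarrow> 'a::real_normed_vector" and k :: "real \<Rightarrow> real"
  assumes "\<gamma> \<le> t0" "t0 \<le> T"
    and e_cont: "continuous_on {\<gamma>..T} e"
    and k_cont: "continuous_on {t0..T} k" and k_nonneg: "\<And>s. s \<in> {t0..T} \<Longrightarrow> 0 \<le> k s"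
    and initial: "\<And>s. s \<in> {\<gamma>..t0} \<Longrightarrow> norm (e s) < c"
    and e_deriv: "\<And>t. t0 < t \<Longrightarrow> t < T \<Longrightarrow> (e has_vector_derivative e' t) (at t)"
    and deriv_bound: "\<And>t. t0 < t \<Longrightarrow> t < T \<Longrightarrow> norm (e' t) \<le> k t * (SUP s\<in>{\<gamma>..t}. norm (e s))"
  shows "norm (e T) < c * exp (integral {t0..T} k)"
proof -
  define K where "K s = integral {t0..s} k" for s
  define w where "w s = c * exp (K s)" for s
  have "0 < c" using initial[of t0] \<open>\<gamma> \<le> t0\<close> by (auto intro: le_less_trans[OF norm_ge_zero])
  have K_deriv: "(K has_real_derivative k s) (at s within {t0..T})" if "s \<in> {t0..T}" for s
    unfolding K_def by (rule integral_has_real_derivative[OF k_cont that])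
  have w_mono: "w s \<le> w s'" if "s \<le> s'" "s' \<le> T" for s s'
    using integral_le_integral_longer[OF k_cont k_nonneg that] \<open>0 < c\<close>
    unfolding w_def K_def by simp
  have c_le_w: "c \<le> w s" if "t0 \<le> s" "s \<le> T" for s
    using w_mono[OF that] by (simp add: w_def K_def)
  have "continuous_on {t0..T} w"
    unfolding w_def using K_deriv
    by (intro continuous_intros)
       (meson DERIV_continuous continuous_on_eq_continuous_within)
  moreover have "(w has_real_derivative k t * w t) (at t)" if "t0 < t" "t < T" for t
  proof -
    have "(K has_real_derivative k t) (at t)"
      using K_deriv[of t] that by (simp add: at_within_Icc_at)
    then show ?thesis
      unfolding w_def[abs_def] by (auto intro!: derivative_eq_intros)
  qed
  moreover have "norm (e' t) \<le> k t * w t"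
    if t: "t0 < t" "t < T" and below: "\<forall>s\<in>{t0..t}. norm (e s) < w s" for t
  proof -
    have "norm (e s) \<le> w t" if "s \<in> {\<gamma>..t}" for s
    proof (cases "s \<le> t0")
      case True
      then show ?thesis using initial[of s] c_le_w[of t] that t by fastforce
    next
      case False
      then have "norm (e s) < w s" using below that by auto
      then show ?thesis using w_mono[of s t] that t by fastforce
    qed
    then have "(SUP s\<in>{\<gamma>..t}. norm (e s)) \<le> w t"
      using t \<open>\<gamma> \<le> t0\<close> by (intro cSUP_least) auto
    then have "k t * (SUP s\<in>{\<gamma>..t}. norm (e s)) \<le> k t * w t"
      using k_nonneg[of t] t by (intro mult_left_mono) auto
    then show ?thesis using deriv_bound[OF t] by linarith
  qed
  moreover have "norm (e t0) < w t0"
    using initial[of t0] \<open>\<gamma> \<le> t0\<close> by (simp add: w_def K_def)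
  ultimately have "norm (e T) < w T"
    using e_cont e_deriv \<open>\<gamma> \<le> t0\<close> \<open>t0 \<le> T\<close>
    by (intro norm_less_barrier[where e' = e']) (auto elim: continuous_on_subset)
  then show ?thesis by (simp add: w_def K_def)
qed

lemma delay_gronwall:
  fixes e e' :: "real \<Rightarrow> 'a::real_normed_vector" and k :: "real \<Rightarrow> real"
  assumes "\<gamma> \<le> t0" "t0 \<le> T"
    and e_cont: "continuous_on {\<gamma>..T} e"
    and k_cont: "continuous_on {t0..T} k" and k_nonneg: "\<And>s. s \<in> {t0..T} \<Longrightarrow> 0 \<le> k s"
    and initial: "\<And>s. s \<in> {\<gamma>..t0} \<Longrightarrow> norm (e s) \<le> M"
    and e_deriv: "\<And>t. t0 < t \<Longrightarrow> t < T \<Longrightarrow> (e has_vector_derivative e' t) (at t)"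
    and deriv_bound: "\<And>t. t0 < t \<Longrightarrow> t < T \<Longrightarrow> norm (e' t) \<le> k t * (SUP s\<in>{\<gamma>..t}. norm (e s))"
  shows "norm (e T) \<le> M * exp (integral {t0..T} k)"
proof (rule field_le_epsilon)
  fix d :: real assume "0 < d"
  define E where "E = exp (integral {t0..T} k)"
  have "0 < d / E" using \<open>0 < d\<close> by (simp add: E_def)
  then have initial_strict: "norm (e s) < M + d / E" if "s \<in> {\<gamma>..t0}" for s
    using initial[OF that] by linarith
  have "norm (e T) < (M + d / E) * exp (integral {t0..T} k)"
    by (rule delay_gronwall_strict[OF assms(1-5) initial_strict assms(7,8)])
  also have "\<dots> = M * E + d"
    by (simp add: E_def distrib_right)
  finally show "norm (e T) \<le> M * E + d" by simp
qed

lemma is_delay_solution_has_vector_derivative_at: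
  assumes "is_delay_solution f g D \<gamma> t0 \<beta> \<theta> x" "t0 < t" "ereal t < \<beta>"
  shows "(x has_vector_derivative f t (\<lambda>j. x (g j t))) (at t)"
proof -
  obtain T where "ereal t < ereal T" "ereal T < \<beta>"
    using ereal_dense2[OF \<open>ereal t < \<beta>\<close>] by blast
  then have "t < T" by simp
  have "{t0<..<T} \<subseteq> {t0..T}" by auto
  then have sub: "{t0<..<T} \<subseteq> hoiv t0 \<beta>"
    using Icc_subset_hoiv[OF \<open>ereal T < \<beta>\<close>] by (rule subset_trans)
  have "t \<in> hoiv t0 \<beta>"
    using assms(2,3) unfolding hoiv_def by simp
  then have "(x has_vector_derivative f t (\<lambda>j. x (g j t))) (at t within hoiv t0 \<beta>)"
    using assms(1) unfolding is_delay_solution_def by blast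
  then have "(x has_vector_derivative f t (\<lambda>j. x (g j t))) (at t within {t0<..<T})"
    using sub by (rule has_vector_derivative_within_subset)
  moreover have "at t within {t0<..<T} = at t"
    using \<open>t0 < t\<close> \<open>t < T\<close> by (intro at_within_open) auto
  ultimately show ?thesis by simp
qed

lemma lipschitz_factor_nonneg:
  fixes F :: "('m::finite \<Rightarrow> 'a::real_normed_vector) \<Rightarrow> 'a"
  assumes "p \<in> D" "q \<in> D" "p \<noteq> q"
    and lip: "\<And>z z'. (\<forall>j. z j \<in> D) \<Longrightarrow> (\<forall>j. z' j \<in> D) \<Longrightarrow>
                norm (F z - F z') \<le> c * maxnorm (\<lambda>j. z j - z' j)"
  shows "0 \<le> c"
proof -
  have "0 \<le> c * norm (p - q)"
    using lip[of "\<lambda>_. p" "\<lambda>_. q"] assms by (metis maxnorm_const norm_ge_zero order_trans)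
  then show ?thesis using \<open>p \<noteq> q\<close> by (simp add: zero_le_mult_iff)
qed

lemma is_delay_solution_in_domain:
  assumes "is_delay_solution f g D \<gamma> t0 \<beta> \<theta> x" "ereal b < \<beta>" "s \<in> {\<gamma>..b}"
  shows "x s \<in> D"
  using assms Icc_subset_hoiv[OF assms(2), of \<gamma>] unfolding is_delay_solution_def by blast

lemma delay_solutions_norm_diff_le:
  fixes f :: "real \<Rightarrow> ('m::finite \<Rightarrow> 'a::real_normed_vector) \<Rightarrow> 'a"
  assumes "\<gamma> \<le> t0" "t0 \<le> T" "ereal T < \<beta>"
    and k_cont: "continuous_on (hoiv t0 \<beta>) k"
    and k_nonneg: "\<And>t. t \<in> hoiv t0 \<beta> \<Longrightarrow> 0 \<le> k t"
    and lip: "\<And>t z z'. t \<in> hoiv t0 \<beta> \<Longrightarrow> (\<forall>j. z j \<in> D) \<Longrightarrow> (\<forall>j. z' j \<in> D) \<Longrightarrow>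
               norm (f t z - f t z') \<le> k t * maxnorm (\<lambda>j. z j - z' j)"
    and g_bounds: "\<And>j t. t \<in> hoiv t0 \<beta> \<Longrightarrow> \<gamma> \<le> g j t \<and> g j t \<le> t"
    and x_sol: "is_delay_solution f g D \<gamma> t0 \<beta> \<theta> x"
    and x'_sol: "is_delay_solution f g D \<gamma> t0 \<beta> \<theta>' x'"
    and initial: "\<And>s. s \<in> {\<gamma>..t0} \<Longrightarrow> norm (\<theta> s - \<theta>' s) \<le> M"
  shows "norm (x T - x' T) \<le> M * exp (integral {t0..T} k)"
proof -
  have sub: "{\<gamma>..T} \<subseteq> hoiv \<gamma> \<beta>" "{t0..T} \<subseteq> hoiv t0 \<beta>"
    using Icc_subset_hoiv[OF \<open>ereal T < \<beta>\<close>] by auto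
  have e_cont: "continuous_on {\<gamma>..T} (\<lambda>s. x s - x' s)"
    using x_sol x'_sol sub unfolding is_delay_solution_def
    by (auto intro!: continuous_intros elim: continuous_on_subset)
  show ?thesis
  proof (rule delay_gronwall[where e' = "\<lambda>t. f t (\<lambda>j. x (g j t)) - f t (\<lambda>j. x' (g j t))"])
    show "continuous_on {t0..T} k" using k_cont sub(2) by (rule continuous_on_subset)
    show "0 \<le> k s" if "s \<in> {t0..T}" for s using k_nonneg sub(2) that by auto
    show "norm (x s - x' s) \<le> M" if "s \<in> {\<gamma>..t0}" for s
      using initial[OF that] x_sol x'_sol that unfolding is_delay_solution_def by auto
  next
    fix t assume t: "t0 < t" "t < T"
    then have "ereal t < \<beta>" using \<open>ereal T < \<beta>\<close> by (auto intro: order.strict_trans[rotated])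
    with t show "((\<lambda>s. x s - x' s) has_vector_derivative
        f t (\<lambda>j. x (g j t)) - f t (\<lambda>j. x' (g j t))) (at t)"
      by (intro has_vector_derivative_diff is_delay_solution_has_vector_derivative_at[OF x_sol]
          is_delay_solution_has_vector_derivative_at[OF x'_sol])
    have t_hoiv: "t \<in> hoiv t0 \<beta>" using sub(2) t by auto
    have g_in: "g j t \<in> {\<gamma>..t}" for j using g_bounds[OF t_hoiv] by auto
    have "maxnorm (\<lambda>j. x (g j t) - x' (g j t)) \<le> (SUP s\<in>{\<gamma>..t}. norm (x s - x' s))"
      unfolding maxnorm_le_iff
      using g_in t e_cont
      by (auto intro!: cSUP_upper bdd_above_norm_image elim: continuous_on_subset)
    then have "k t * maxnorm (\<lambda>j. x (g j t) - x' (g j t))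
        \<le> k t * (SUP s\<in>{\<gamma>..t}. norm (x s - x' s))"
      using k_nonneg[OF t_hoiv] by (rule mult_left_mono)
    moreover have "\<forall>j. x (g j t) \<in> D" "\<forall>j. x' (g j t) \<in> D"
      using g_in \<open>ereal t < \<beta>\<close>
      by (auto intro!: is_delay_solution_in_domain[OF x_sol] is_delay_solution_in_domain[OF x'_sol])
    ultimately show "norm (f t (\<lambda>j. x (g j t)) - f t (\<lambda>j. x' (g j t)))
        \<le> k t * (SUP s\<in>{\<gamma>..t}. norm (x s - x' s))"
      using lip[OF t_hoiv] by (meson order_trans)
  qed (fact assms e_cont)+
qed

theorem mainTheorem2:
  fixes t0 :: real and \<beta> :: ereal and D :: "'a::real_normed_vector set"
    and f :: "real \<Rightarrow> ('m::finite \<Rightarrow> 'a) \<Rightarrow> 'a"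
    and k :: "real \<Rightarrow> real" and g :: "'m \<Rightarrow> real \<Rightarrow> real" and \<gamma> :: real
    and \<theta> \<theta>' x x' :: "real \<Rightarrow> 'a"
  assumes t0_lt: "ereal t0 < \<beta>"
    and D_open: "open D"
    and f_cont: "continuous_on (hoiv t0 \<beta> \<times> {z. \<forall>j. z j \<in> D}) (\<lambda>(t, z). f t z)"
    and k_cont: "continuous_on (hoiv t0 \<beta>) k"
    and lip: "\<And>t z z'. t \<in> hoiv t0 \<beta> \<Longrightarrow> (\<forall>j. z j \<in> D) \<Longrightarrow> (\<forall>j. z' j \<in> D) \<Longrightarrow>
               norm (f t z - f t z') \<le> k t * maxnorm (\<lambda>j. z j - z' j)"
    and g_cont: "\<And>j. continuous_on (hoiv t0 \<beta>) (g j)"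
    and \<gamma>_le: "\<gamma> \<le> t0"
    and g_bounds: "\<And>j t. t \<in> hoiv t0 \<beta> \<Longrightarrow> \<gamma> \<le> g j t \<and> g j t \<le> t"
    and \<theta>_cont: "continuous_on {\<gamma>..t0} \<theta>" and \<theta>_D: "\<theta> ` {\<gamma>..t0} \<subseteq> D"
    and \<theta>'_cont: "continuous_on {\<gamma>..t0} \<theta>'" and \<theta>'_D: "\<theta>' ` {\<gamma>..t0} \<subseteq> D"
    and x_sol: "is_delay_solution f g D \<gamma> t0 \<beta> \<theta> x"
    and x'_sol: "is_delay_solution f g D \<gamma> t0 \<beta> \<theta>' x'"
  shows "\<forall>t\<in>hoiv t0 \<beta>. norm (x t - x' t) \<le>
           (SUP s\<in>{\<gamma>..t0}. norm (\<theta> s - \<theta>' s)) * exp (integral {t0..t} k)"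
proof
  fix T assume "T \<in> hoiv t0 \<beta>"
  then have "t0 \<le> T" "ereal T < \<beta>" by (auto simp: hoiv_def)
  define M where "M = (SUP s\<in>{\<gamma>..t0}. norm (\<theta> s - \<theta>' s))"
  have initial: "norm (\<theta> s - \<theta>' s) \<le> M" if "s \<in> {\<gamma>..t0}" for s
    unfolding M_def using that \<theta>_cont \<theta>'_cont
    by (intro cSUP_upper bdd_above_norm_image continuous_intros)
  show "norm (x T - x' T) \<le> M * exp (integral {t0..T} k)"
    \<comment> \<open>The Lipschitz condition forces \<open>k \<ge> 0\<close> only when \<open>D\<close> has two points;
       otherwise both solutions coincide.\<close>
  proof (cases "\<exists>p\<in>D. \<exists>q\<in>D. p \<noteq> q")
    case True
    then obtain p q where "p \<in> D" "q \<in> D" "p \<noteq> q" by blast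
    then have "0 \<le> k t" if "t \<in> hoiv t0 \<beta>" for t
      using lip[OF that] by (rule lipschitz_factor_nonneg)
    then show ?thesis
      using delay_solutions_norm_diff_le[OF \<gamma>_le \<open>t0 \<le> T\<close> \<open>ereal T < \<beta>\<close> k_cont _ lip
          g_bounds x_sol x'_sol initial] by blast
  next
    case False
    moreover have "x T \<in> D" "x' T \<in> D"
      using \<gamma>_le \<open>t0 \<le> T\<close> \<open>ereal T < \<beta>\<close>
      by (auto intro!: is_delay_solution_in_domain[OF x_sol] is_delay_solution_in_domain[OF x'_sol])
    moreover have "0 \<le> M" using initial[of t0] \<gamma>_le by (auto intro: order_trans[OF norm_ge_zero])
    ultimately show ?thesis by auto
  qed
qed

end
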